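(* Let $\Phi:\mathbb{R}^n\to(-\infty,\infty]$ be a proper lower semicontinuous convex function which is strictly convex on $\operatorname{dom}\Phi$. Then there exists a lower semicontinuous convex function $\tilde\varphi:[0,\infty)\times\mathbb{R}^n\to(-\infty,\infty]$ such that $\tilde\varphi(0,y)=\Phi(y)$ for all $y$, $\tilde\varphi$ is real-valued on $(0,\infty)\times\mathbb{R}^n$, $x\mapsto\tilde\varphi(x,y)$ is decreasing for each $y$, $\lim_{x\to0+}\tilde\varphi(x,y)=\Phi(y)$ for each $y$, and moreover $\tilde\varphi$ is strictly convex on $(0,\infty)\times\mathbb{R}^n$.
   Context: A convex function $\Phi:\mathbb{R}^n\to(-\infty,\infty]$ is proper if it is not identically $+\infty$. $\operatorname{dom}\Phi:=\{y\in\mathbb{R}^n:\Phi(y)<\infty\}$. *)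

theory Defs
  imports "HOL-Analysis.Analysis" "HOL-Library.Extended_Real"
begin

text \<open>Extended-real-valued notions (values in ereal; we only apply them to
functions that never take the value minus infinity).\<close>

definition ext_convex_on :: "'a::real_vector set \<Rightarrow> ('a \<Rightarrow> ereal) \<Rightarrow> bool" where
  "ext_convex_on S f \<longleftrightarrow>
     (\<forall>x\<in>S. \<forall>y\<in>S. \<forall>t::real. 0 < t \<and> t < 1 \<longrightarrow>
        f ((1 - t) *\<^sub>R x + t *\<^sub>R y) \<le> ereal (1 - t) * f x + ereal t * f y)"

definition ext_strict_convex_on :: "'a::real_vector set \<Rightarrow> ('a \<Rightarrow> ereal) \<Rightarrow> bool" where
  "ext_strict_convex_on S f \<longleftrightarrow>
     (\<forall>x\<in>S. \<forall>y\<in>S. \<forall>t::real. x \<noteq> y \<and> 0 < t \<and> t < 1 \<longrightarrow>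
        f ((1 - t) *\<^sub>R x + t *\<^sub>R y) < ereal (1 - t) * f x + ereal t * f y)"

definition ext_lsc_on :: "'a::topological_space set \<Rightarrow> ('a \<Rightarrow> ereal) \<Rightarrow> bool" where
  "ext_lsc_on S f \<longleftrightarrow> (\<forall>z\<in>S. f z \<le> Liminf (at z within S) f)"

definition edom :: "('a \<Rightarrow> ereal) \<Rightarrow> 'a set" where
  "edom f = {y. f y < \<infinity>}"

end

theory Submission
  imports Defs
begin

(*
  The candidate is the Moreau envelope (Hopf-Lax formula)
  psi(x, y) = inf_z Phi(z) + |y - z|^2/(2x), the infimal convolution in y of Phi with the
  perspective of |.|^2/2. Since that perspective is jointly convex and the infimum is attained
  (Phi is bounded below by a cone, the kernel grows quadratically), psi is jointly convex; it is
  finite for x > 0, decreasing in x and equal to Phi at x = 0. Strict convexity of Phi on its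
  domain and of |.|^2 make psi(x, .) strictly convex, and adding the strictly convex decreasing
  term 1/(1 + x) - 1 gives strictness in x as well. Lower semicontinuity comes from a uniform
  lower bound of psi near (0, y) and, for x > 0, from continuity of finite convex functions on
  open sets.
*)

lemma sqnorm_persp_gap:
  fixes a b :: "'a::real_inner"
  assumes "0 < x1" "0 < x2" "0 < t" "t < 1"
  shows "(1-t) * (norm a^2 / (2*x1)) + t * (norm b^2 / (2*x2))
           - norm ((1-t) *\<^sub>R a + t *\<^sub>R b)^2 / (2*((1-t)*x1 + t*x2))
       = t*(1-t) * norm (x2 *\<^sub>R a - x1 *\<^sub>R b)^2 / (2*x1*x2*((1-t)*x1 + t*x2))"
proof -
  have "0 < (1-t)*x1 + t*x2" using assms by (simp add: add_pos_pos)
  then show ?thesis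
    using assms unfolding power2_norm_eq_inner
    by (simp add: inner_add_left inner_add_right inner_diff_left inner_diff_right inner_commute
        divide_simps) (simp add: algebra_simps power2_eq_square)
qed

lemma sqnorm_persp_convex_real:
  fixes a b :: "'a::real_inner"
  assumes "0 < x1" "0 < x2" "0 < t" "t < 1"
  shows "norm ((1-t) *\<^sub>R a + t *\<^sub>R b)^2 / (2*((1-t)*x1 + t*x2))
       \<le> (1-t) * (norm a^2 / (2*x1)) + t * (norm b^2 / (2*x2))"
proof -
  have "0 < (1-t)*x1 + t*x2" using assms by (simp add: add_pos_pos)
  then have "0 \<le> t*(1-t) * norm (x2 *\<^sub>R a - x1 *\<^sub>R b)^2 / (2*x1*x2*((1-t)*x1 + t*x2))"
    using assms by simp
  then show ?thesis using sqnorm_persp_gap[OF assms, of a b] by linarith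
qed

lemma sqnorm_strict_convex_real:
  fixes a b :: "'a::real_inner"
  assumes "0 < x" "0 < t" "t < 1" "a \<noteq> b"
  shows "norm ((1-t) *\<^sub>R a + t *\<^sub>R b)^2 / (2*x)
       < (1-t) * (norm a^2 / (2*x)) + t * (norm b^2 / (2*x))"
proof -
  have "x *\<^sub>R a - x *\<^sub>R b \<noteq> 0" using assms by (simp flip: scaleR_right_diff_distrib)
  then have "0 < t*(1-t) * norm (x *\<^sub>R a - x *\<^sub>R b)^2 / (2*x*x*((1-t)*x + t*x))"
    using assms by (simp add: algebra_simps)
  then show ?thesis
    using sqnorm_persp_gap[of x x t a b] assms by (simp add: algebra_simps)
qed

(* The closed perspective of w \<mapsto> |w|^2/2: at x = 0 it is the indicator of {0},
   which makes the Moreau envelope below reduce to \<Phi> at x = 0. *)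
definition sqnorm_persp :: "real \<Rightarrow> 'a::real_normed_vector \<Rightarrow> ereal" where
  "sqnorm_persp x w = (if 0 < x then ereal (norm w^2 / (2*x)) else if w = 0 then 0 else \<infinity>)"

lemma sqnorm_persp_nonneg: "0 \<le> sqnorm_persp x w"
  by (auto simp: sqnorm_persp_def)

lemma sqnorm_persp_zero_right [simp]: "sqnorm_persp x 0 = 0"
  by (simp add: sqnorm_persp_def)

lemma sqnorm_persp_pos: "0 < x \<Longrightarrow> sqnorm_persp x w = ereal (norm w^2 / (2*x))"
  by (simp add: sqnorm_persp_def)

lemma sqnorm_persp_antimono:
  assumes "0 \<le> x1" "x1 \<le> x2"
  shows "sqnorm_persp x2 w \<le> sqnorm_persp x1 w"
  using assms by (cases "x1 = 0") (auto simp: sqnorm_persp_def frac_le)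

lemma sqnorm_persp_scale:
  assumes "0 < t"
  shows "sqnorm_persp (t*x) (t *\<^sub>R w) = ereal t * sqnorm_persp x w"
  using assms by (auto simp: sqnorm_persp_def zero_less_mult_iff power_mult_distrib
      power2_eq_square ereal_mult_infty)

lemma sqnorm_persp_convex:
  fixes w1 w2 :: "'a::real_inner"
  assumes x1: "0 \<le> x1" and x2: "0 \<le> x2" and t: "0 < t" "t < 1"
  shows "sqnorm_persp ((1-t)*x1 + t*x2) ((1-t) *\<^sub>R w1 + t *\<^sub>R w2)
       \<le> ereal (1-t) * sqnorm_persp x1 w1 + ereal t * sqnorm_persp x2 w2"
proof -
  consider "0 < x1" "0 < x2" | "x1 = 0" "w1 \<noteq> 0" | "x2 = 0" "w2 \<noteq> 0"
    | "x1 = 0" "w1 = 0" | "x2 = 0" "w2 = 0"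
    using x1 x2 by linarith
  then show ?thesis
  proof cases
    case 1
    then have "0 < (1-t)*x1 + t*x2" using t by (simp add: add_pos_pos)
    then show ?thesis
      using 1 sqnorm_persp_convex_real[OF 1 t, of w1 w2] by (simp add: sqnorm_persp_pos)
  next
    case 2
    then show ?thesis
      using t sqnorm_persp_nonneg[of x2 w2] by (simp add: sqnorm_persp_def ereal_mult_infty)
  next
    case 3
    then show ?thesis
      using t sqnorm_persp_nonneg[of x1 w1] by (simp add: sqnorm_persp_def ereal_mult_infty)
  next
    case 4
    then show ?thesis using t by (simp add: sqnorm_persp_scale)
  next
    case 5
    then show ?thesis using t by (simp add: sqnorm_persp_scale)
  qed
qed

lemma ereal_convex_comb_add_le:
  fixes a1 a2 b1 b2 A B :: ereal
  assumes "a1 \<noteq> -\<infinity>" "a2 \<noteq> -\<infinity>" "b1 \<noteq> -\<infinity>" "b2 \<noteq> -\<infinity>" "0 < t" "t < 1"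
    and "A \<le> ereal (1-t) * a1 + ereal t * a2" "B \<le> ereal (1-t) * b1 + ereal t * b2"
  shows "A + B \<le> ereal (1-t) * (a1 + b1) + ereal t * (a2 + b2)"
proof -
  have "(ereal (1-t) * a1 + ereal t * a2) + (ereal (1-t) * b1 + ereal t * b2)
      = ereal (1-t) * (a1 + b1) + ereal t * (a2 + b2)"
    using assms(1-6) by (cases a1; cases a2; cases b1; cases b2) (auto simp: algebra_simps)
  then show ?thesis using add_mono[OF assms(7,8)] by simp
qed

lemma INF_attained_if_compact_sublevels:
  fixes F :: "'a::heine_borel \<Rightarrow> ereal"
  assumes compact: "\<And>c. compact {z. F z \<le> ereal c}" and inf: "(INF z. F z) = ereal m"
  shows "\<exists>z. F z = ereal m"
proof -
  define T where "T k = {z. F z \<le> ereal (m + 1 / Suc k)}" for k :: nat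
  have "T k \<noteq> {}" for k
  proof -
    have "(INF z. F z) < ereal (m + 1 / Suc k)" using inf by simp
    then show ?thesis by (auto simp: T_def INF_less_iff intro: less_imp_le)
  qed
  moreover have "T n \<subseteq> T k" if "k \<le> n" for k n
    using that by (auto simp: T_def frac_le elim!: order_trans)
  ultimately obtain z where "z \<in> \<Inter>(range T)"
    using compact_nest[of T] compact unfolding T_def by blast
  then have le: "F z \<le> ereal (m + 1 / Suc k)" for k by (auto simp: T_def)
  have "F z \<le> ereal m"
  proof (rule ereal_le_epsilon2)
    fix e :: real assume "0 < e"
    then obtain k where "inverse (real (Suc k)) < e" using reals_Archimedean by blast
    then show "F z \<le> ereal m + ereal e"
      using le[of k] by (auto simp: field_simps elim!: order_trans)
  qed
  moreover have "ereal m \<le> F z" using inf by (metis INF_lower UNIV_I)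
  ultimately show ?thesis by (intro exI antisym)
qed

lemma quadratic_le_linear_bound:
  fixes s p q :: real
  assumes "0 \<le> p" "s^2 \<le> p * s + q"
  shows "s \<le> p + \<bar>q\<bar> + 1"
proof (rule ccontr)
  assume big: "\<not> ?thesis"
  then have "s > 1" by (smt (verit) assms(1))
  moreover have "s * s > s * (p + \<bar>q\<bar> + 1)"
    using big \<open>s > 1\<close> by (intro mult_strict_left_mono) auto
  moreover have "s * (\<bar>q\<bar> + 1) \<ge> \<bar>q\<bar> + 1" using \<open>s > 1\<close>
    by (simp add: mult_le_cancel_right1 add_nonneg_pos)
  ultimately show False using assms by (simp add: power2_eq_square algebra_simps)
qed

lemma far_sqnorm_dominates_linear:
  fixes x r s b M :: real
  assumes "0 < x" "0 < r" "0 \<le> b" "0 \<le> M" "r/2 < s" "x < r / (4 * (b + 2*M/r + 1))"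
  shows "b * s + M \<le> s^2 / (2*x)"
proof -
  define D where "D = b + 2*M/r + 1"
  have "0 < D" using assms by (simp add: D_def add_nonneg_pos)
  then have "4*x*D < r" using assms by (simp add: D_def field_simps)
  then have "2*x*D < s" using assms by linarith
  then have "s * D \<le> s^2 / (2*x)"
    using assms by (simp add: field_simps power2_eq_square)
  moreover have "M * r \<le> M * (2 * s)" using assms by (intro mult_left_mono) auto
  then have "M \<le> 2 * M * s / r" using assms by (simp add: field_simps)
  moreover have "0 < s" using assms by linarith
  ultimately show ?thesis by (simp add: D_def algebra_simps)
qed

definition decay :: "real \<Rightarrow> real" where
  "decay x = 1 / (1 + x) - 1"

lemma decay_convex_gap:
  assumes "0 \<le> x1" "0 \<le> x2" "0 < t" "t < 1"
  shows "(1-t) * decay x1 + t * decay x2 - decay ((1-t)*x1 + t*x2)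
       = t*(1-t) * (x1 - x2)^2 / ((1 + x1) * (1 + x2) * (1 + ((1-t)*x1 + t*x2)))"
proof -
  have "0 < 1 + x1" "0 < 1 + x2" "0 < 1 + ((1-t)*x1 + t*x2)"
    using assms by (auto intro!: add_pos_nonneg)
  then show ?thesis
    unfolding decay_def by (simp add: divide_simps) (simp add: algebra_simps power2_eq_square)
qed

lemma decay_convex:
  assumes "0 \<le> x1" "0 \<le> x2" "0 < t" "t < 1"
  shows "decay ((1-t)*x1 + t*x2) \<le> (1-t) * decay x1 + t * decay x2"
proof -
  have "0 \<le> t*(1-t) * (x1 - x2)^2 / ((1 + x1) * (1 + x2) * (1 + ((1-t)*x1 + t*x2)))"
    using assms by (intro divide_nonneg_nonneg mult_nonneg_nonneg) auto
  then show ?thesis using decay_convex_gap[OF assms] by linarith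
qed

lemma decay_strict_convex:
  assumes "0 \<le> x1" "0 \<le> x2" "0 < t" "t < 1" "x1 \<noteq> x2"
  shows "decay ((1-t)*x1 + t*x2) < (1-t) * decay x1 + t * decay x2"
proof -
  have "0 < t*(1-t) * (x1 - x2)^2 / ((1 + x1) * (1 + x2) * (1 + ((1-t)*x1 + t*x2)))"
    using assms by (intro divide_pos_pos mult_pos_pos) (auto intro!: add_pos_nonneg)
  then show ?thesis using decay_convex_gap[OF assms(1-4)] by linarith
qed

lemma decay_zero [simp]: "decay 0 = 0"
  by (simp add: decay_def)

lemma decay_nonpos: "0 \<le> x \<Longrightarrow> decay x \<le> 0"
  by (simp add: decay_def)

lemma decay_ge: "0 \<le> x \<Longrightarrow> -x \<le> decay x"
  by (simp add: decay_def field_simps)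

lemma decay_antimono: "0 \<le> x1 \<Longrightarrow> x1 \<le> x2 \<Longrightarrow> decay x2 \<le> decay x1"
  by (simp add: decay_def frac_le)

locale proper_lsc_convex =
  fixes \<Phi> :: "'a::euclidean_space \<Rightarrow> ereal"
  assumes no_minf: "\<forall>y. \<Phi> y \<noteq> -\<infinity>"
    and proper: "\<exists>y. \<Phi> y \<noteq> \<infinity>"
    and lsc: "ext_lsc_on UNIV \<Phi>"
    and cvx: "ext_convex_on UNIV \<Phi>"
begin

lemma Phi_gt_near:
  assumes "ereal c < \<Phi> y0"
  shows "\<exists>r>0. \<forall>z. dist z y0 < r \<longrightarrow> ereal c < \<Phi> z"
proof -
  have "\<Phi> y0 \<le> Liminf (at y0) \<Phi>" using lsc unfolding ext_lsc_on_def by auto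
  then have "eventually (\<lambda>z. ereal c < \<Phi> z) (at y0)" using assms le_Liminf_iff by blast
  then obtain r where "0 < r" "\<forall>z. z \<noteq> y0 \<and> dist z y0 < r \<longrightarrow> ereal c < \<Phi> z"
    unfolding eventually_at by auto
  then show ?thesis using assms by metis
qed

lemma Phi_convex:
  "0 < t \<Longrightarrow> t < 1 \<Longrightarrow> \<Phi> ((1-t) *\<^sub>R x + t *\<^sub>R y) \<le> ereal (1-t) * \<Phi> x + ereal t * \<Phi> y"
  using cvx unfolding ext_convex_on_def by blast

lemma Phi_ge_off_ball:
  assumes v: "\<Phi> y1 = ereal v" and r: "0 < r" "\<forall>w. dist w y1 < r \<longrightarrow> ereal (v - 1) < \<Phi> w"
    and far: "r \<le> dist z y1"
  shows "ereal (v - 1 - 2 * dist z y1 / r) \<le> \<Phi> z"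
proof (cases "\<Phi> z")
  case (real u)
  define d where "d = dist z y1"
  define t where "t = r / (2*d)"
  have d: "0 < d" "r \<le> d" using r far by (auto simp: d_def)
  then have t: "0 < t" "t < 1" using r by (auto simp: t_def field_simps)
  define w where "w = (1-t) *\<^sub>R y1 + t *\<^sub>R z"
  have "w - y1 = t *\<^sub>R (z - y1)" by (simp add: w_def algebra_simps)
  then have "dist w y1 = r / 2" using t d r(1) by (simp add: dist_norm d_def t_def)
  then have "ereal (v - 1) < \<Phi> w" using r by simp
  also have "\<Phi> w \<le> ereal ((1-t) * v + t * u)"
    using Phi_convex[OF t, of y1 z] v real by (simp add: w_def)
  finally have "t * (v - 1/t) < t * u" using t by (simp add: algebra_simps)
  then have "v - 1/t < u" using t by simp
  moreover have "1/t = 2 * d / r" using r d by (simp add: t_def)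
  ultimately show ?thesis using real r d by (simp add: d_def)
qed (use no_minf in auto)

lemma Phi_ge_cone: "\<exists>a b. 0 \<le> b \<and> (\<forall>z. ereal (a - b * norm z) \<le> \<Phi> z)"
proof -
  obtain y1 where "\<Phi> y1 \<noteq> \<infinity>" using proper by auto
  then obtain v where v: "\<Phi> y1 = ereal v" using no_minf by (cases "\<Phi> y1") auto
  obtain r where r: "0 < r" "\<forall>w. dist w y1 < r \<longrightarrow> ereal (v - 1) < \<Phi> w"
    using Phi_gt_near[of "v - 1" y1] v by auto
  have near_or_far: "ereal (v - 1 - 2 * dist z y1 / r) \<le> \<Phi> z" for z
  proof (cases "dist z y1 < r")
    case True
    then have "ereal (v - 1) < \<Phi> z" using r by auto
    moreover have "v - 1 - 2 * dist z y1 / r \<le> v - 1" using r by simp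
    ultimately show ?thesis by (meson ereal_less_eq(3) less_imp_le order_trans)
  qed (use Phi_ge_off_ball[OF v r] in auto)
  show ?thesis
  proof (intro exI conjI allI)
    show "0 \<le> 2 / r" using r by simp
    fix z
    have "dist z y1 \<le> norm z + norm y1" by (simp add: dist_norm norm_triangle_ineq4)
    then have "2 * dist z y1 / r \<le> 2 * (norm z + norm y1) / r"
      using r by (simp add: divide_right_mono)
    then have "v - 1 - 2 * norm y1 / r - 2 / r * norm z \<le> v - 1 - 2 * dist z y1 / r"
      by (simp add: add_divide_distrib field_simps)
    then show "ereal (v - 1 - 2 * norm y1 / r - 2 / r * norm z) \<le> \<Phi> z"
      using near_or_far[of z] by (meson ereal_less_eq(3) order_trans)
  qed
qed

lemma closed_sublevel_add_continuous:
  assumes q: "continuous_on UNIV q"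
  shows "closed {z. \<Phi> z + ereal (q z) \<le> ereal c}"
  unfolding closed_def open_dist
proof (intro ballI)
  fix z0 assume "z0 \<in> - {z. \<Phi> z + ereal (q z) \<le> ereal c}"
  then have "ereal (c - q z0) < \<Phi> z0" by (cases "\<Phi> z0") auto
  then obtain a where a': "ereal (c - q z0) < ereal a" "ereal a < \<Phi> z0"
    using ereal_dense2 by blast
  then have a: "c - q z0 < a" "ereal a < \<Phi> z0" by auto
  obtain r1 where r1: "0 < r1" "\<forall>z. dist z z0 < r1 \<longrightarrow> ereal a < \<Phi> z"
    using Phi_gt_near[OF a(2)] by auto
  have "0 < q z0 - (c - a)" using a(1) by simp
  then obtain r2 where r2: "0 < r2" "\<forall>z. dist z z0 < r2 \<longrightarrow> dist (q z) (q z0) < q z0 - (c - a)"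
    using q unfolding continuous_on_iff by blast
  show "\<exists>e>0. \<forall>y. dist y z0 < e \<longrightarrow> y \<in> - {z. \<Phi> z + ereal (q z) \<le> ereal c}"
  proof (intro exI[of _ "min r1 r2"] conjI allI impI)
    show "0 < min r1 r2" using r1 r2 by simp
    fix y assume "dist y z0 < min r1 r2"
    then have "ereal a < \<Phi> y" "c - a < q y" using r1 r2 by (auto simp: dist_real_def)
    then show "y \<in> - {z. \<Phi> z + ereal (q z) \<le> ereal c}" by (cases "\<Phi> y") auto
  qed
qed

definition moreau :: "real \<Rightarrow> 'a \<Rightarrow> ereal" where
  "moreau x y = (INF z. \<Phi> z + sqnorm_persp x (y - z))"

lemma moreau_le_sum: "moreau x y \<le> \<Phi> z + sqnorm_persp x (y - z)"
  unfolding moreau_def by (rule INF_lower) simp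

lemma moreau_le: "moreau x y \<le> \<Phi> y"
  using moreau_le_sum[of x y y] by simp

lemma moreau_zero: "moreau 0 y = \<Phi> y"
proof (rule antisym)
  show "\<Phi> y \<le> moreau 0 y" unfolding moreau_def
  proof (rule INF_greatest)
    fix z
    show "\<Phi> y \<le> \<Phi> z + sqnorm_persp 0 (y - z)"
      using no_minf by (cases "z = y"; cases "\<Phi> z") (auto simp: sqnorm_persp_def)
  qed
qed (rule moreau_le)

lemma Phi_add_sqnorm_persp_lower_bound:
  assumes b: "0 \<le> b" and ab: "\<forall>z. ereal (a - b * norm z) \<le> \<Phi> z" and x: "0 < x"
  shows "ereal (a - b * norm y - b^2 * x / 2) \<le> \<Phi> z + sqnorm_persp x (y - z)"
proof (cases "\<Phi> z")
  case (real u)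
  define s where "s = norm (y - z)"
  have "norm z \<le> norm y + s" unfolding s_def by (metis norm_triangle_sub add.commute norm_minus_commute)
  then have "a - b * norm y - b * s \<le> u"
    using ab[rule_format, of z] real mult_left_mono[OF _ b] by (fastforce simp: algebra_simps)
  moreover have "0 \<le> (s - b*x)^2 / (2*x)" using x by simp
  moreover have "s^2 / (2*x) - b * s + b^2 * x / 2 = (s - b*x)^2 / (2*x)" using x
    by (simp add: field_simps power2_eq_square)
  ultimately have "a - b * norm y - b^2 * x / 2 \<le> u + s^2 / (2*x)" by linarith
  then show ?thesis using real x by (simp add: sqnorm_persp_pos s_def)
qed (use no_minf in auto)

lemma moreau_real: assumes "0 < x" shows "\<exists>m. moreau x y = ereal m"
proof -
  obtain a b where ab: "0 \<le> b" "\<forall>z. ereal (a - b * norm z) \<le> \<Phi> z" using Phi_ge_cone by auto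
  obtain y1 where "\<Phi> y1 \<noteq> \<infinity>" using proper by auto
  then obtain u where u: "\<Phi> y1 = ereal u" using no_minf by (cases "\<Phi> y1") auto
  have "moreau x y \<le> ereal (u + norm (y - y1)^2 / (2*x))"
    using moreau_le_sum[of x y y1] u assms by (simp add: sqnorm_persp_pos)
  moreover have "ereal (a - b * norm y - b^2 * x / 2) \<le> moreau x y"
    unfolding moreau_def by (rule INF_greatest) (use Phi_add_sqnorm_persp_lower_bound[OF ab assms] in auto)
  ultimately show ?thesis by (cases "moreau x y") auto
qed

lemma moreau_notminf: "0 \<le> x \<Longrightarrow> moreau x y \<noteq> -\<infinity>"
  using moreau_real[of x y] moreau_zero[of y] no_minf by (cases "x = 0") auto

lemma moreau_sublevel_bounded:
  assumes x: "0 < x"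
  shows "bounded {z. \<Phi> z + ereal (norm (y - z)^2 / (2*x)) \<le> ereal c}"
proof -
  obtain a b where ab: "0 \<le> b" "\<forall>z. ereal (a - b * norm z) \<le> \<Phi> z" using Phi_ge_cone by auto
  define C where "C = 2*x * (c - a + b * norm y)"
  have "norm (y - z) \<le> 2*x*b + \<bar>C\<bar> + 1"
    if z: "\<Phi> z + ereal (norm (y - z)^2 / (2*x)) \<le> ereal c" for z
  proof -
    define s where "s = norm (y - z)"
    obtain u where u: "\<Phi> z = ereal u" using z no_minf by (cases "\<Phi> z") auto
    have "norm z \<le> norm y + s" unfolding s_def by (metis norm_triangle_sub add.commute norm_minus_commute)
    then have "a - b * norm y - b * s \<le> u"
      using ab(2)[rule_format, of z] u mult_left_mono[OF _ ab(1)] by (fastforce simp: algebra_simps)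
    moreover have "u + s^2 / (2*x) \<le> c" using z u by (simp add: s_def)
    ultimately have "s^2 / (2*x) \<le> b * s + (c - a + b * norm y)" by linarith
    then have "s^2 \<le> (2*x*b) * s + C" using x by (simp add: C_def field_simps)
    then show ?thesis unfolding s_def using quadratic_le_linear_bound x ab(1) by simp
  qed
  then have "{z. \<Phi> z + ereal (norm (y - z)^2 / (2*x)) \<le> ereal c} \<subseteq> cball y (2*x*b + \<bar>C\<bar> + 1)"
    by (auto simp: dist_norm)
  then show ?thesis using bounded_cball bounded_subset by blast
qed

lemma moreau_attained:
  assumes "0 \<le> x"
  shows "\<exists>z. moreau x y = \<Phi> z + sqnorm_persp x (y - z)"
proof (cases "x = 0")
  case True
  then show ?thesis by (intro exI[of _ y]) (simp add: moreau_zero)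
next
  case False
  then have x: "0 < x" using assms by simp
  define F where "F z = \<Phi> z + ereal (norm (y - z)^2 / (2*x))" for z
  have "continuous_on UNIV (\<lambda>z. norm (y - z)^2 / (2*x))"
    using x by (intro continuous_intros) auto
  then have "compact {z. F z \<le> ereal c}" for c
    unfolding compact_eq_bounded_closed F_def
    using moreau_sublevel_bounded[OF x] closed_sublevel_add_continuous by blast
  moreover obtain m where m: "moreau x y = ereal m" using moreau_real[OF x] by blast
  moreover have "moreau x y = (INF z. F z)"
    using x by (simp add: moreau_def F_def sqnorm_persp_pos)
  ultimately obtain z where "F z = moreau x y"
    using INF_attained_if_compact_sublevels[of F m] by auto
  then show ?thesis using x by (metis F_def sqnorm_persp_pos)
qed

lemma moreau_antimono: "0 \<le> x1 \<Longrightarrow> x1 \<le> x2 \<Longrightarrow> moreau x2 y \<le> moreau x1 y"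
  unfolding moreau_def by (intro INF_mono) (auto intro!: add_left_mono sqnorm_persp_antimono)

lemma moreau_convex:
  assumes x1: "0 \<le> x1" and x2: "0 \<le> x2" and t: "0 < t" "t < 1"
  shows "moreau ((1-t)*x1 + t*x2) ((1-t) *\<^sub>R y1 + t *\<^sub>R y2)
       \<le> ereal (1-t) * moreau x1 y1 + ereal t * moreau x2 y2"
proof -
  obtain z1 where z1: "moreau x1 y1 = \<Phi> z1 + sqnorm_persp x1 (y1 - z1)"
    using moreau_attained[OF x1] by blast
  obtain z2 where z2: "moreau x2 y2 = \<Phi> z2 + sqnorm_persp x2 (y2 - z2)"
    using moreau_attained[OF x2] by blast
  define zt where "zt = (1-t) *\<^sub>R z1 + t *\<^sub>R z2"
  have w: "(1-t) *\<^sub>R y1 + t *\<^sub>R y2 - zt = (1-t) *\<^sub>R (y1 - z1) + t *\<^sub>R (y2 - z2)"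
    by (simp add: zt_def algebra_simps)
  have "moreau ((1-t)*x1 + t*x2) ((1-t) *\<^sub>R y1 + t *\<^sub>R y2)
      \<le> \<Phi> zt + sqnorm_persp ((1-t)*x1 + t*x2) ((1-t) *\<^sub>R y1 + t *\<^sub>R y2 - zt)"
    by (rule moreau_le_sum)
  also have "\<dots> \<le> ereal (1-t) * (\<Phi> z1 + sqnorm_persp x1 (y1 - z1))
                   + ereal t * (\<Phi> z2 + sqnorm_persp x2 (y2 - z2))"
    unfolding w
  proof (rule ereal_convex_comb_add_le)
    show "\<Phi> z1 \<noteq> -\<infinity>" "\<Phi> z2 \<noteq> -\<infinity>" using no_minf by auto
    show "sqnorm_persp x1 (y1 - z1) \<noteq> -\<infinity>" "sqnorm_persp x2 (y2 - z2) \<noteq> -\<infinity>"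
      by (simp_all add: sqnorm_persp_def)
    show "\<Phi> zt \<le> ereal (1-t) * \<Phi> z1 + ereal t * \<Phi> z2"
      unfolding zt_def by (rule Phi_convex[OF t])
  qed (use sqnorm_persp_convex[OF x1 x2 t] t in auto)
  finally show ?thesis using z1 z2 by simp
qed

lemma moreau_strict_convex_snd:
  assumes strict: "ext_strict_convex_on (edom \<Phi>) \<Phi>"
    and x: "0 < x" and y: "y1 \<noteq> y2" and t: "0 < t" "t < 1"
  shows "moreau x ((1-t) *\<^sub>R y1 + t *\<^sub>R y2) < ereal (1-t) * moreau x y1 + ereal t * moreau x y2"
proof -
  obtain z1 where z1: "moreau x y1 = \<Phi> z1 + sqnorm_persp x (y1 - z1)"
    using moreau_attained x by (meson less_imp_le)
  obtain z2 where z2: "moreau x y2 = \<Phi> z2 + sqnorm_persp x (y2 - z2)"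
    using moreau_attained x by (meson less_imp_le)
  obtain u1 where u1: "\<Phi> z1 = ereal u1"
    using z1 moreau_real[OF x, of y1] no_minf by (cases "\<Phi> z1") (auto simp: sqnorm_persp_pos[OF x])
  obtain u2 where u2: "\<Phi> z2 = ereal u2"
    using z2 moreau_real[OF x, of y2] no_minf by (cases "\<Phi> z2") (auto simp: sqnorm_persp_pos[OF x])
  define k1 where "k1 = norm (y1 - z1)^2 / (2*x)"
  define k2 where "k2 = norm (y2 - z2)^2 / (2*x)"
  define kt where "kt = norm ((1-t) *\<^sub>R (y1 - z1) + t *\<^sub>R (y2 - z2))^2 / (2*x)"
  define zt where "zt = (1-t) *\<^sub>R z1 + t *\<^sub>R z2"
  have "(1-t) *\<^sub>R y1 + t *\<^sub>R y2 - zt = (1-t) *\<^sub>R (y1 - z1) + t *\<^sub>R (y2 - z2)"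
    by (simp add: zt_def algebra_simps)
  then have lhs: "moreau x ((1-t) *\<^sub>R y1 + t *\<^sub>R y2) \<le> \<Phi> zt + ereal kt"
    using moreau_le_sum[of x "(1-t) *\<^sub>R y1 + t *\<^sub>R y2" zt]
    by (simp add: sqnorm_persp_pos[OF x] kt_def)
  have rhs: "ereal (1-t) * moreau x y1 + ereal t * moreau x y2 = ereal ((1-t)*(u1+k1) + t*(u2+k2))"
    using z1 z2 u1 u2 x by (simp add: sqnorm_persp_pos k1_def k2_def)
  have kt: "kt \<le> (1-t)*k1 + t*k2"
    using sqnorm_persp_convex_real[OF x x t, of "y1 - z1" "y2 - z2"]
    by (simp add: kt_def k1_def k2_def algebra_simps)
  show ?thesis
  proof (cases "z1 = z2")
    case False
    have "z1 \<in> edom \<Phi>" "z2 \<in> edom \<Phi>" using u1 u2 by (auto simp: edom_def)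
    then have "\<Phi> zt < ereal ((1-t)*u1 + t*u2)"
      using strict False t u1 u2 unfolding ext_strict_convex_on_def zt_def by fastforce
    then obtain u where "\<Phi> zt = ereal u" "u < (1-t)*u1 + t*u2"
      using no_minf by (cases "\<Phi> zt") auto
    then show ?thesis
      using lhs kt unfolding rhs by (auto simp: algebra_simps elim!: le_less_trans)
  next
    case True
    then have "y1 - z1 \<noteq> y2 - z2" using y by auto
    then have "kt < (1-t)*k1 + t*k2"
      using sqnorm_strict_convex_real[OF x t] by (simp add: kt_def k1_def k2_def)
    moreover have "zt = z1" using True by (simp add: zt_def algebra_simps)
    ultimately show ?thesis
      using lhs True u1 u2 unfolding rhs by (auto simp: algebra_simps elim!: le_less_trans)
  qed
qed

lemma moreau_ge_near:
  assumes c: "ereal c < \<Phi> y0"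
  shows "\<exists>\<rho>>0. \<forall>x y. 0 \<le> x \<and> x < \<rho> \<and> dist y y0 < \<rho> \<longrightarrow> ereal c \<le> moreau x y"
proof -
  obtain a b where ab: "0 \<le> b" "\<forall>z. ereal (a - b * norm z) \<le> \<Phi> z" using Phi_ge_cone by auto
  obtain r where r: "0 < r" "\<forall>z. dist z y0 < r \<longrightarrow> ereal c < \<Phi> z" using Phi_gt_near[OF c] by auto
  define A where "A = a - b * (norm y0 + r/2)"
  define M where "M = max 0 (c - A)"
  define \<rho> where "\<rho> = min (r/2) (r / (4 * (b + 2*M/r + 1)))"
  have "0 < b + 2*M/r + 1" using ab r by (simp add: M_def add_nonneg_pos)
  then have "0 < \<rho>" using r by (simp add: \<rho>_def)
  moreover have "ereal c \<le> \<Phi> z + sqnorm_persp x (y - z)"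
    if x: "0 \<le> x" "x < \<rho>" and y: "dist y y0 < \<rho>" for x y z
  proof (cases "dist z y0 < r")
    case True
    then have "ereal c \<le> \<Phi> z" using r by (simp add: less_imp_le)
    then show ?thesis using add_mono[OF _ sqnorm_persp_nonneg] by fastforce
  next
    case False
    define s where "s = norm (y - z)"
    have "dist z y0 \<le> s + dist y y0"
      using dist_triangle[of z y0 y] by (simp add: s_def dist_norm norm_minus_commute)
    then have s: "r/2 < s" using False y by (simp add: \<rho>_def)
    consider "x = 0" | "0 < x" using x by linarith
    then show ?thesis
    proof cases
      case 1
      then have "sqnorm_persp x (y - z) = \<infinity>" using s r by (auto simp: sqnorm_persp_def s_def)
      then show ?thesis using no_minf by (cases "\<Phi> z") auto
    next
      case 2
      show ?thesis
      proof (cases "\<Phi> z")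
        case (real u)
        have "norm z \<le> norm y0 + r/2 + s"
          using norm_triangle_sub[of y y0] norm_triangle_sub[of z y] y
          by (simp add: s_def \<rho>_def dist_norm norm_minus_commute)
        then have "A - b * s \<le> u"
          using ab(2)[rule_format, of z] real mult_left_mono[OF _ ab(1)]
          by (fastforce simp: A_def algebra_simps)
        moreover have "b * s + M \<le> s^2 / (2*x)"
          using far_sqnorm_dominates_linear[OF 2 r(1) ab(1) _ s] x by (simp add: M_def \<rho>_def)
        ultimately have "c \<le> u + s^2 / (2*x)" by (simp add: M_def)
        then show ?thesis using real 2 by (simp add: sqnorm_persp_pos s_def)
      qed (use no_minf in auto)
    qed
  qed
  ultimately show ?thesis unfolding moreau_def by (blast intro: INF_greatest)
qed


definition phi_tilde :: "real \<times> 'a \<Rightarrow> ereal" where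
  "phi_tilde p = moreau (fst p) (snd p) + ereal (decay (fst p))"

lemma phi_tilde_Pair: "phi_tilde (x, y) = moreau x y + ereal (decay x)"
  by (simp add: phi_tilde_def)

lemma phi_tilde_zero: "phi_tilde (0, y) = \<Phi> y"
  by (simp add: phi_tilde_Pair moreau_zero)

lemma phi_tilde_real: "0 < x \<Longrightarrow> \<exists>m. phi_tilde (x, y) = ereal m"
  using moreau_real[of x y] by (auto simp: phi_tilde_Pair)

lemma phi_tilde_notminf: "0 \<le> x \<Longrightarrow> phi_tilde (x, y) \<noteq> -\<infinity>"
  using moreau_notminf[of x y] by (cases "moreau x y") (auto simp: phi_tilde_Pair)

lemma phi_tilde_le: "0 \<le> x \<Longrightarrow> phi_tilde (x, y) \<le> \<Phi> y"
  using add_mono[OF moreau_le[of x y], of "ereal (decay x)" 0] decay_nonpos[of x]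
  by (simp add: phi_tilde_Pair)

lemma phi_tilde_antimono: "0 \<le> x1 \<Longrightarrow> x1 \<le> x2 \<Longrightarrow> phi_tilde (x2, y) \<le> phi_tilde (x1, y)"
  unfolding phi_tilde_Pair by (intro add_mono moreau_antimono) (auto simp: decay_antimono)

lemma phi_tilde_convex:
  assumes p: "0 \<le> fst p" and q: "0 \<le> fst q" and t: "0 < t" "t < 1"
  shows "phi_tilde ((1-t) *\<^sub>R p + t *\<^sub>R q) \<le> ereal (1-t) * phi_tilde p + ereal t * phi_tilde q"
  unfolding phi_tilde_def
proof (rule ereal_convex_comb_add_le)
  show "moreau (fst p) (snd p) \<noteq> -\<infinity>" "moreau (fst q) (snd q) \<noteq> -\<infinity>"
    using moreau_notminf p q by auto
  show "moreau (fst ((1-t) *\<^sub>R p + t *\<^sub>R q)) (snd ((1-t) *\<^sub>R p + t *\<^sub>R q))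
      \<le> ereal (1-t) * moreau (fst p) (snd p) + ereal t * moreau (fst q) (snd q)"
    using moreau_convex[OF p q t] by simp
  show "ereal (decay (fst ((1-t) *\<^sub>R p + t *\<^sub>R q)))
      \<le> ereal (1-t) * ereal (decay (fst p)) + ereal t * ereal (decay (fst q))"
    using decay_convex[OF p q t] by simp
qed (use t in auto)

(* Along segments with constant first coordinate strictness comes from the Moreau envelope,
   otherwise from decay: the envelope alone can be constant in x, e.g. at a minimiser of \<Phi>. *)
lemma phi_tilde_strict_convex:
  assumes strict: "ext_strict_convex_on (edom \<Phi>) \<Phi>"
    and p: "0 < fst p" and q: "0 < fst q" and t: "0 < t" "t < 1" and pq: "p \<noteq> q"
  shows "phi_tilde ((1-t) *\<^sub>R p + t *\<^sub>R q) < ereal (1-t) * phi_tilde p + ereal t * phi_tilde q"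
proof -
  obtain x1 y1 x2 y2 where pq_eq: "p = (x1, y1)" "q = (x2, y2)" by fastforce
  then have x: "0 < x1" "0 < x2" using p q by auto
  then have xt: "0 < (1-t)*x1 + t*x2" using t by (simp add: add_pos_pos)
  obtain m1 m2 mt where m: "moreau x1 y1 = ereal m1" "moreau x2 y2 = ereal m2"
    "moreau ((1-t)*x1 + t*x2) ((1-t) *\<^sub>R y1 + t *\<^sub>R y2) = ereal mt"
    using moreau_real[OF x(1)] moreau_real[OF x(2)] moreau_real[OF xt] by blast
  have "mt + decay ((1-t)*x1 + t*x2) < (1-t) * (m1 + decay x1) + t * (m2 + decay x2)"
  proof (cases "x1 = x2")
    case False
    have "mt \<le> (1-t)*m1 + t*m2"
      using moreau_convex[of x1 x2 t y1 y2] x t m by simp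
    moreover have "decay ((1-t)*x1 + t*x2) < (1-t) * decay x1 + t * decay x2"
      using decay_strict_convex[of x1 x2 t] x t False by simp
    ultimately show ?thesis by (simp add: algebra_simps)
  next
    case True
    then have "y1 \<noteq> y2" using pq pq_eq by simp
    then have "mt < (1-t)*m1 + t*m2"
      using moreau_strict_convex_snd[OF strict x(1) _ t, of y1 y2] m True by (simp add: algebra_simps)
    then show ?thesis using True by (simp add: algebra_simps)
  qed
  then show ?thesis using m pq_eq by (simp add: phi_tilde_def)
qed

lemma phi_tilde_gt_near:
  assumes "c < \<Phi> y0"
  shows "\<exists>\<rho>>0. \<forall>x y. 0 \<le> x \<and> x < \<rho> \<and> dist y y0 < \<rho> \<longrightarrow> c < phi_tilde (x, y)"
proof -
  obtain c2 where c2: "c < ereal c2" "ereal c2 < \<Phi> y0" using ereal_dense2[OF assms] by blast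
  obtain c1 where c1: "c < ereal c1" "ereal c1 < ereal c2" using ereal_dense2[OF c2(1)] by blast
  have c: "c < ereal c1" "c1 < c2" "ereal c2 < \<Phi> y0" using c1 c2 by auto
  obtain \<rho> where \<rho>: "0 < \<rho>" "\<forall>x y. 0 \<le> x \<and> x < \<rho> \<and> dist y y0 < \<rho> \<longrightarrow> ereal c2 \<le> moreau x y"
    using moreau_ge_near[OF c(3)] by blast
  have "ereal c1 < phi_tilde (x, y)" if "0 \<le> x" "x < min \<rho> (c2 - c1)" "dist y y0 < \<rho>" for x y
  proof -
    have "ereal c1 < ereal c2 + ereal (decay x)" using decay_ge[of x] that by simp
    also have "\<dots> \<le> phi_tilde (x, y)"
      unfolding phi_tilde_Pair using \<rho> that by (intro add_right_mono) auto
    finally show ?thesis .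
  qed
  then show ?thesis using \<rho>(1) c
    by (intro exI[of _ "min \<rho> (c2 - c1)"]) (auto elim: less_trans)
qed

lemma phi_tilde_ext_convex: "ext_convex_on ({0..} \<times> UNIV) phi_tilde"
  unfolding ext_convex_on_def using phi_tilde_convex by (auto simp: mem_Times_iff)

lemma phi_tilde_ext_strict_convex:
  assumes "ext_strict_convex_on (edom \<Phi>) \<Phi>"
  shows "ext_strict_convex_on ({0<..} \<times> UNIV) phi_tilde"
  unfolding ext_strict_convex_on_def
  using phi_tilde_strict_convex[OF assms] by (auto simp: mem_Times_iff)

lemma phi_tilde_continuous_pos:
  "continuous_on ({0<..} \<times> UNIV) (\<lambda>p. real_of_ereal (phi_tilde p))"
proof (rule convex_on_continuous)
  show "open ({0::real<..} \<times> (UNIV :: 'a set))" by (intro open_Times) auto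
  have real_valued: "phi_tilde p = ereal (real_of_ereal (phi_tilde p))" if "0 < fst p" for p
    using phi_tilde_real[OF that, of "snd p"] by auto
  show "convex_on ({0<..} \<times> UNIV) (\<lambda>p. real_of_ereal (phi_tilde p))"
  proof (rule convex_onI)
    show "convex ({0::real<..} \<times> (UNIV :: 'a set))" by (intro convex_Times) auto
    fix t :: real and p q :: "real \<times> 'a"
    assume t: "0 < t" "t < 1" and pq: "p \<in> {0<..} \<times> UNIV" "q \<in> {0<..} \<times> UNIV"
    then have "0 < fst ((1-t) *\<^sub>R p + t *\<^sub>R q)" by (auto intro!: add_pos_pos)
    then obtain a b c where "phi_tilde ((1-t) *\<^sub>R p + t *\<^sub>R q) = ereal a"
      "phi_tilde p = ereal b" "phi_tilde q = ereal c"
      using real_valued pq by (metis mem_Times_iff greaterThan_iff)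
    then show "real_of_ereal (phi_tilde ((1-t) *\<^sub>R p + t *\<^sub>R q))
        \<le> (1-t) * real_of_ereal (phi_tilde p) + t * real_of_ereal (phi_tilde q)"
      using phi_tilde_convex[of p q t] t pq by (auto simp: mem_Times_iff)
  qed
qed

lemma phi_tilde_lsc: "ext_lsc_on ({0..} \<times> UNIV) phi_tilde"
  unfolding ext_lsc_on_def le_Liminf_iff
proof (intro ballI allI impI)
  fix z c assume z: "z \<in> {0::real..} \<times> (UNIV :: 'a set)" and c: "c < phi_tilde z"
  obtain x0 y0 where z_eq: "z = (x0, y0)" by fastforce
  show "\<forall>\<^sub>F p in at z within {0..} \<times> UNIV. c < phi_tilde p"
  proof (cases "x0 = 0")
    case True
    then obtain \<rho> where \<rho>: "0 < \<rho>" "\<forall>x y. 0 \<le> x \<and> x < \<rho> \<and> dist y y0 < \<rho> \<longrightarrow> c < phi_tilde (x, y)"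
      using phi_tilde_gt_near c z_eq phi_tilde_zero by metis
    have "c < phi_tilde (x, y)" if "0 \<le> x" "dist (x, y) z < \<rho>" for x y
      using \<rho>(2) that dist_fst_le[of "(x, y)" z] dist_snd_le[of "(x, y)" z] True z_eq
      by (auto simp: dist_real_def)
    then show ?thesis
      unfolding eventually_at using \<rho>(1) by (auto simp: mem_Times_iff)
  next
    case False
    define f where "f p = real_of_ereal (phi_tilde p)" for p
    have S: "open ({0::real<..} \<times> (UNIV :: 'a set))" "z \<in> {0<..} \<times> UNIV"
      using False z z_eq by (auto intro!: open_Times)
    have real_valued: "phi_tilde p = ereal (f p)" if "p \<in> {0<..} \<times> UNIV" for p
      using phi_tilde_real[of "fst p" "snd p"] that by (auto simp: f_def mem_Times_iff)
    have "isCont f z"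
      using phi_tilde_continuous_pos S continuous_on_eq_continuous_at unfolding f_def by blast
    then have "(f \<longlongrightarrow> f z) (at z within {0..} \<times> UNIV)"
      using continuous_at_imp_continuous_at_within continuous_within by blast
    then have "((\<lambda>p. ereal (f p)) \<longlongrightarrow> ereal (f z)) (at z within {0..} \<times> UNIV)"
      by (rule tendsto_ereal)
    moreover have "c < ereal (f z)" using c real_valued[OF S(2)] by simp
    ultimately have "\<forall>\<^sub>F p in at z within {0..} \<times> UNIV. c < ereal (f p)"
      by (rule order_tendstoD(1))
    moreover have "\<forall>\<^sub>F p in at z within {0..} \<times> UNIV. p \<in> {0<..} \<times> UNIV"
      unfolding eventually_at_topological using S by blast
    ultimately show ?thesis
      by eventually_elim (simp add: real_valued)
  qed
qed

lemma phi_tilde_tendsto_at_right: "((\<lambda>x. phi_tilde (x, y)) \<longlongrightarrow> \<Phi> y) (at_right 0)"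
proof (rule order_tendstoI)
  fix a assume "a < \<Phi> y"
  then obtain \<rho> where "0 < \<rho>" "\<forall>x y'. 0 \<le> x \<and> x < \<rho> \<and> dist y' y < \<rho> \<longrightarrow> a < phi_tilde (x, y')"
    using phi_tilde_gt_near by blast
  then show "\<forall>\<^sub>F x in at_right 0. a < phi_tilde (x, y)"
    unfolding eventually_at_right[OF zero_less_one] by (intro exI[of _ \<rho>]) auto
next
  fix a assume a: "\<Phi> y < a"
  show "\<forall>\<^sub>F x in at_right 0. phi_tilde (x, y) < a"
    using eventually_at_right_less[of "0::real"]
  proof (rule eventually_mono)
    fix x :: real assume "0 < x"
    then show "phi_tilde (x, y) < a" using phi_tilde_le[of x y] a by simp
  qed
qed

end

theorem corollary2:
  fixes \<Phi> :: "real ^ 'n \<Rightarrow> ereal"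
  assumes no_minf: "\<forall>y. \<Phi> y \<noteq> -\<infinity>"
    and proper: "\<exists>y. \<Phi> y \<noteq> \<infinity>"
    and lsc: "ext_lsc_on UNIV \<Phi>"
    and cvx: "ext_convex_on UNIV \<Phi>"
    and strict: "ext_strict_convex_on (edom \<Phi>) \<Phi>"
  shows "\<exists>\<phi> :: real \<times> (real ^ 'n) \<Rightarrow> ereal.
           (\<forall>z \<in> ({0::real..} \<times> (UNIV :: (real ^ 'n) set)). \<phi> z \<noteq> -\<infinity>)
         \<and> ext_lsc_on (({0::real..} \<times> (UNIV :: (real ^ 'n) set))) \<phi>
         \<and> ext_convex_on (({0::real..} \<times> (UNIV :: (real ^ 'n) set))) \<phi>
         \<and> (\<forall>y. \<phi> (0, y) = \<Phi> y)
         \<and> (\<forall>x>0. \<forall>y. \<phi> (x, y) \<noteq> \<infinity> \<and> \<phi> (x, y) \<noteq> -\<infinity>)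
         \<and> (\<forall>y. \<forall>x1 x2. 0 \<le> x1 \<and> x1 \<le> x2 \<longrightarrow> \<phi> (x2, y) \<le> \<phi> (x1, y))
         \<and> (\<forall>y. ((\<lambda>x. \<phi> (x, y)) \<longlongrightarrow> \<Phi> y) (at_right 0))
         \<and> ext_strict_convex_on (({0::real<..} \<times> (UNIV :: (real ^ 'n) set))) \<phi>"
proof -
  interpret proper_lsc_convex \<Phi> using no_minf proper lsc cvx by unfold_locales
  show ?thesis
  proof (intro exI[of _ phi_tilde] conjI)
    show "\<forall>z \<in> {0..} \<times> UNIV. phi_tilde z \<noteq> -\<infinity>"
      using phi_tilde_notminf by (auto simp: mem_Times_iff)
    show "\<forall>x>0. \<forall>y. phi_tilde (x, y) \<noteq> \<infinity> \<and> phi_tilde (x, y) \<noteq> -\<infinity>"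
    proof (intro allI impI)
      fix x :: real and y assume "0 < x"
      then obtain m where "phi_tilde (x, y) = ereal m" using phi_tilde_real by blast
      then show "phi_tilde (x, y) \<noteq> \<infinity> \<and> phi_tilde (x, y) \<noteq> -\<infinity>" by simp
    qed
  qed (use phi_tilde_lsc phi_tilde_ext_convex phi_tilde_zero phi_tilde_antimono
        phi_tilde_tendsto_at_right phi_tilde_ext_strict_convex[OF strict] in auto)
qed

end
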